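(* A linear map $T:\mathbb C^d\to\mathbb C^d$ ($d$ a positive integer) is recurrent if and only if it is similar to a diagonal matrix all of whose diagonal entries have modulus $1$.
   Context: $T$ is recurrent if for every non-empty open $U\subset\mathbb C^d$ there is a positive integer $k$ with $U\cap T^{-k}(U)\neq\emptyset$. *)

theory Defs
  imports "HOL-Analysis.Analysis"
begin

definition recurrent :: "('a::topological_space \<Rightarrow> 'a) \<Rightarrow> bool" where
  "recurrent T \<longleftrightarrow>
     (\<forall>U. open U \<and> U \<noteq> {} \<longrightarrow> (\<exists>k::nat. k > 0 \<and> U \<inter> (T ^^ k) -` U \<noteq> {}))"

end

(*
  A unimodular diagonal matrix is a linear isometry, so every orbit is bounded; by compactness two
  iterates T^m x and T^n x come close, and since T is an isometry T^(n-m) x is then close to x.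
  Recurrence is invariant under linear conjugacy, so this gives sufficiency.

  Conversely, bring a recurrent A into Jordan form J. A coordinate that is an eigenfunction,
  y_b o J = c * y_b, forces |c| = 1: otherwise the iterates of any point push |y_b| monotonically
  out of a small band around its initial value. A Jordan block of size at least two yields a
  coordinate with y_a o J = c * y_a + y_b, whence |y_a(J^k y)| >= k |y_b(y)| - |y_a(y)|, so points
  with y_a small and y_b not small never return. Hence J is diagonal with unimodular entries.
*)
theory Submission
  imports Defs "Jordan_Normal_Form.Jordan_Normal_Form_Existence"
begin

\<comment> \<open>Jordan_Normal_Form's vector indexing and matrix constructor clash with those of
  \<open>Finite_Cartesian_Product\<close>, in which the theorem is stated.\<close>
no_notation Matrix.vec_index (infixl \<open>$\<close> 100)
hide_const (open) Matrix.mat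

lemma recurrent_conjugate:
  fixes f :: "'a::topological_space \<Rightarrow> 'b::topological_space"
  assumes rec: "recurrent T" and cont: "continuous_on UNIV g"
    and gf: "\<And>x. g (f x) = x" and fg: "\<And>y. f (g y) = y"
  shows "recurrent (\<lambda>x. g (T (f x)))"
  unfolding recurrent_def
proof (intro allI impI)
  have iter: "((\<lambda>x. g (T (f x))) ^^ k) x = g ((T ^^ k) (f x))" for k x
    by (induction k) (simp_all add: gf fg)
  fix U :: "'a set"
  assume U: "open U \<and> U \<noteq> {}"
  then obtain u where "u \<in> U" by blast
  then have "f u \<in> g -` U" by (simp add: gf)
  moreover have "open (g -` U)"
    using U cont by (simp add: continuous_on_open_vimage)
  ultimately obtain k x where "k > 0" "x \<in> g -` U" "(T ^^ k) x \<in> g -` U"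
    using rec unfolding recurrent_def by blast
  then show "\<exists>k>0. U \<inter> ((\<lambda>x. g (T (f x))) ^^ k) -` U \<noteq> {}"
    by (intro exI[of _ k]) (auto simp: iter fg)
qed

lemma isometry_orbit_returns:
  fixes T :: "'a::heine_borel \<Rightarrow> 'a"
  assumes iso: "\<And>x y. dist (T x) (T y) = dist x y"
    and bdd: "bounded (range (\<lambda>k. (T ^^ k) x))" and "e > 0"
  shows "\<exists>k>0. dist ((T ^^ k) x) x < e"
proof -
  have iso_iter: "dist ((T ^^ k) y) ((T ^^ k) z) = dist y z" for k y z
    by (induction k) (simp_all add: iso)
  obtain l r where r: "strict_mono r" and lim: "((\<lambda>k. (T ^^ k) x) \<circ> r) \<longlonglongrightarrow> l"
    using bounded_imp_convergent_subsequence[OF bdd] by blast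
  obtain N where N: "\<And>m n. m \<ge> N \<Longrightarrow> n \<ge> N \<Longrightarrow> dist ((T ^^ r m) x) ((T ^^ r n) x) < e"
    using LIMSEQ_imp_Cauchy[OF lim] \<open>e > 0\<close> unfolding Cauchy_def o_def by meson
  have less: "r N < r (Suc N)" using r by (simp add: strict_mono_def)
  have "(T ^^ r (Suc N)) x = (T ^^ r N) ((T ^^ (r (Suc N) - r N)) x)"
    using less by (metis funpow_add o_apply le_add_diff_inverse less_imp_le)
  then have "dist ((T ^^ (r (Suc N) - r N)) x) x = dist ((T ^^ r (Suc N)) x) ((T ^^ r N) x)"
    by (simp add: iso_iter)
  also have "\<dots> < e" using N[of "Suc N" N] by simp
  finally show ?thesis using less by (intro exI[of _ "r (Suc N) - r N"]) simp
qed

lemma recurrent_isometry: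
  fixes T :: "'a::heine_borel \<Rightarrow> 'a"
  assumes iso: "\<And>x y. dist (T x) (T y) = dist x y"
    and bdd: "\<And>x. bounded (range (\<lambda>k. (T ^^ k) x))"
  shows "recurrent T"
  unfolding recurrent_def
proof (intro allI impI)
  fix U :: "'a set"
  assume U: "open U \<and> U \<noteq> {}"
  then obtain x e where "x \<in> U" "e > 0" "ball x e \<subseteq> U"
    by (meson all_not_in_conv openE)
  moreover obtain k where "k > 0" "dist ((T ^^ k) x) x < e"
    using isometry_orbit_returns[OF iso bdd \<open>e > 0\<close>] by blast
  ultimately have "x \<in> U \<inter> (T ^^ k) -` U"
    by (auto simp: dist_commute)
  then show "\<exists>k>0. U \<inter> (T ^^ k) -` U \<noteq> {}"
    using \<open>k > 0\<close> by blast
qed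

lemma recurrent_linear_isometry:
  fixes T :: "'a::{real_normed_vector,heine_borel} \<Rightarrow> 'a"
  assumes "linear T" and norm_T: "\<And>x. norm (T x) = norm x"
  shows "recurrent T"
proof (rule recurrent_isometry)
  show "dist (T x) (T y) = dist x y" for x y
    by (simp add: dist_norm norm_T flip: linear_diff[OF \<open>linear T\<close>])
  have "norm ((T ^^ k) x) = norm x" for k x
    by (induction k) (simp_all add: norm_T)
  then show "bounded (range (\<lambda>k. (T ^^ k) x))" for x
    by (auto simp: bounded_iff)
qed

lemma recurrent_eigenfunction_unimodular:
  fixes T :: "'a::topological_space \<Rightarrow> 'a" and \<phi> :: "'a \<Rightarrow> 'b::real_normed_div_algebra"
  assumes rec: "recurrent T" and cont: "continuous_on UNIV \<phi>"
    and eigen: "\<And>x. \<phi> (T x) = c * \<phi> x" and "\<phi> x\<^sub>0 \<noteq> 0"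
  shows "norm c = 1"
proof (rule ccontr)
  assume "norm c \<noteq> 1"
  define \<mu> where "\<mu> = norm c"
  define r where "r = norm (\<phi> x\<^sub>0)"
  define \<delta> where "\<delta> = \<bar>\<mu> - 1\<bar> / (\<mu> + 1)"
  have "\<mu> \<ge> 0" "\<mu> \<noteq> 1" "r > 0"
    using \<open>norm c \<noteq> 1\<close> \<open>\<phi> x\<^sub>0 \<noteq> 0\<close> by (simp_all add: \<mu>_def r_def)
  then have "\<delta> > 0" by (simp add: \<delta>_def)
  have norm_iter: "norm (\<phi> ((T ^^ k) y)) = \<mu> ^ k * norm (\<phi> y)" for k y
  proof -
    have "\<phi> ((T ^^ k) y) = c ^ k * \<phi> y"
      by (induction k) (simp_all add: eigen mult.assoc)
    then show ?thesis by (simp add: \<mu>_def norm_mult norm_power)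
  qed
  \<comment> \<open>\<open>\<delta>\<close> is chosen so that \<open>\<mu>\<close> times one end of the band is exactly its other end.\<close>
  define U where "U = {y. (1 - \<delta>) * r < norm (\<phi> y) \<and> norm (\<phi> y) < (1 + \<delta>) * r}"
  have "open U"
    unfolding U_def by (intro open_Collect_conj open_Collect_less continuous_intros cont)
  moreover have "x\<^sub>0 \<in> U" using \<open>\<delta> > 0\<close> \<open>r > 0\<close> by (simp add: U_def flip: r_def)
  ultimately obtain k y where "k > 0" "y \<in> U" "(T ^^ k) y \<in> U"
    using rec unfolding recurrent_def by blast
  then have y: "(1 - \<delta>) * r < norm (\<phi> y)" "norm (\<phi> y) < (1 + \<delta>) * r"
    and Ty: "(1 - \<delta>) * r < \<mu> ^ k * norm (\<phi> y)" "\<mu> ^ k * norm (\<phi> y) < (1 + \<delta>) * r"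
    by (simp_all add: U_def norm_iter)
  show False
  proof (cases "\<mu> > 1")
    case True
    have "\<mu> * norm (\<phi> y) \<le> \<mu> ^ k * norm (\<phi> y)"
      using power_increasing[of 1 k \<mu>] True \<open>k > 0\<close> by (intro mult_right_mono) auto
    moreover have "\<mu> * (1 - \<delta>) = 1 + \<delta>" using True by (simp add: \<delta>_def field_simps)
    ultimately show False
      using y(1) Ty(2) True \<open>r > 0\<close> by (smt (verit) mult.assoc mult_strict_left_mono)
  next
    case False
    with \<open>\<mu> \<noteq> 1\<close> have "\<mu> < 1" by simp
    have "\<mu> ^ k * norm (\<phi> y) \<le> \<mu> * norm (\<phi> y)"
      using power_decreasing[of 1 k \<mu>] \<open>\<mu> < 1\<close> \<open>\<mu> \<ge> 0\<close> \<open>k > 0\<close> by (intro mult_right_mono) auto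
    moreover have "\<mu> * (1 + \<delta>) = 1 - \<delta>" using \<open>\<mu> < 1\<close> \<open>\<mu> \<ge> 0\<close> by (simp add: \<delta>_def field_simps)
    ultimately show False
      using y(2) Ty(1) \<open>\<mu> \<ge> 0\<close> \<open>r > 0\<close> by (smt (verit) mult.assoc mult_left_mono)
  qed
qed

lemma not_recurrent_if_jordan_chain:
  fixes T :: "'a::topological_space \<Rightarrow> 'a" and \<phi> \<psi> :: "'a \<Rightarrow> 'b::real_normed_field"
  assumes cont: "continuous_on UNIV \<phi>" "continuous_on UNIV \<psi>"
    and chain: "\<And>x. \<phi> (T x) = c * \<phi> x + \<psi> x" and eigen: "\<And>x. \<psi> (T x) = c * \<psi> x"
    and "\<phi> x\<^sub>0 = 0" "\<psi> x\<^sub>0 \<noteq> 0"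
  shows "\<not> recurrent T"
proof
  assume rec: "recurrent T"
  have "norm c = 1"
    using recurrent_eigenfunction_unimodular[OF rec cont(2) eigen \<open>\<psi> x\<^sub>0 \<noteq> 0\<close>] .
  have \<psi>_iter: "\<psi> ((T ^^ k) y) = c ^ k * \<psi> y" for k y
    by (induction k) (simp_all add: eigen)
  have \<phi>_iter: "\<phi> ((T ^^ Suc k) y) = c ^ Suc k * \<phi> y + of_nat (Suc k) * c ^ k * \<psi> y" for k y
    by (induction k) (simp_all add: chain eigen \<psi>_iter algebra_simps)
  have \<phi>_growth: "norm (\<phi> ((T ^^ Suc k) y)) \<ge> norm (\<psi> y) - norm (\<phi> y)" for k y
  proof -
    have "norm (\<psi> y) \<le> real (Suc k) * norm (\<psi> y)"
      by (simp add: mult_le_cancel_right1)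
    also have "\<dots> = norm (of_nat (Suc k) * c ^ k * \<psi> y)"
      by (simp only: norm_mult norm_power norm_of_nat \<open>norm c = 1\<close>) simp
    also have "\<dots> \<le> norm (\<phi> ((T ^^ Suc k) y)) + norm (c ^ Suc k * \<phi> y)"
      unfolding \<phi>_iter
      using norm_triangle_ineq4[of "c ^ Suc k * \<phi> y + of_nat (Suc k) * c ^ k * \<psi> y" "c ^ Suc k * \<phi> y"]
      by simp
    finally show ?thesis by (simp add: norm_mult norm_power \<open>norm c = 1\<close>)
  qed
  define \<epsilon> where "\<epsilon> = norm (\<psi> x\<^sub>0) / 3"
  define U where "U = {y. norm (\<phi> y) < \<epsilon> \<and> 2 * \<epsilon> < norm (\<psi> y)}"
  have "open U"
    unfolding U_def by (intro open_Collect_conj open_Collect_less continuous_intros cont)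
  moreover have "x\<^sub>0 \<in> U" using \<open>\<phi> x\<^sub>0 = 0\<close> \<open>\<psi> x\<^sub>0 \<noteq> 0\<close> by (simp add: U_def \<epsilon>_def)
  ultimately obtain k y where "k > 0" "y \<in> U" "(T ^^ k) y \<in> U"
    using rec unfolding recurrent_def by blast
  then obtain m where "y \<in> U" "(T ^^ Suc m) y \<in> U" by (cases k) auto
  then show False using \<phi>_growth[where k = m and y = y] by (simp add: U_def)
qed

lemma matrix_vector_mult_nth_supported:
  fixes M :: "'a::semiring_1^'n^'m"
  assumes "\<And>j. j \<notin> S \<Longrightarrow> M $ i $ j = 0"
  shows "(M *v x) $ i = (\<Sum>j\<in>S. M $ i $ j * x $ j)"
  unfolding matrix_vector_mult_def using assms by (auto intro: sum.mono_neutral_right)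

lemma matrix_inv_inverses:
  fixes A :: "'a::semiring_1^'n^'m"
  assumes "invertible A"
  shows "A ** matrix_inv A = mat 1" "matrix_inv A ** A = mat 1"
  using someI_ex[OF assms[unfolded invertible_def]] by (simp_all add: matrix_inv_def)

lemma matrix_inv_unique:
  fixes A B :: "'a::semiring_1^'n^'n"
  assumes AB: "A ** B = mat 1" and BA: "B ** A = mat 1"
  shows "matrix_inv A = B"
proof -
  have "invertible A" using AB BA by (auto simp: invertible_def)
  then have "matrix_inv A = matrix_inv A ** (A ** B)" by (simp add: AB)
  also have "\<dots> = B" by (simp add: matrix_mul_assoc matrix_inv_inverses \<open>invertible A\<close>)
  finally show ?thesis .
qed

lemma recurrent_matrix_similar:
  fixes A P Q :: "'a::{real_normed_field,euclidean_space}^'n^'n"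
  assumes "recurrent (\<lambda>x. A *v x)"
    and PQ: "P ** Q = mat 1" and QP: "Q ** P = mat 1"
  shows "recurrent (\<lambda>x. (Q ** A ** P) *v x)"
proof -
  have "recurrent (\<lambda>x. Q *v (A *v (P *v x)))"
    by (rule recurrent_conjugate[where f = "\<lambda>x. P *v x"])
      (simp_all add: assms(1) matrix_vector_mult_linear_continuous_on matrix_vector_mul_assoc PQ QP)
  then show ?thesis by (simp add: matrix_vector_mul_assoc matrix_mul_assoc)
qed

lemma recurrent_similar_iff:
  fixes M P :: "'a::{real_normed_field,euclidean_space}^'n^'n"
  assumes "invertible P"
  shows "recurrent (\<lambda>x. (P ** M ** matrix_inv P) *v x) \<longleftrightarrow> recurrent (\<lambda>x. M *v x)"
proof
  note inverses = matrix_inv_inverses[OF \<open>invertible P\<close>]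
  assume "recurrent (\<lambda>x. (P ** M ** matrix_inv P) *v x)"
  from recurrent_matrix_similar[OF this inverses]
  have "recurrent (\<lambda>x. ((matrix_inv P ** P) ** M ** (matrix_inv P ** P)) *v x)"
    by (simp add: matrix_mul_assoc)
  then show "recurrent (\<lambda>x. M *v x)" by (simp add: inverses)
next
  assume "recurrent (\<lambda>x. M *v x)"
  then show "recurrent (\<lambda>x. (P ** M ** matrix_inv P) *v x)"
    by (rule recurrent_matrix_similar[OF _ matrix_inv_inverses(2,1)[OF \<open>invertible P\<close>]])
qed

lemma recurrent_diagonal_iff:
  fixes D :: "'a::{real_normed_field,heine_borel}^'n^'n"
  assumes off: "\<And>i j. i \<noteq> j \<Longrightarrow> D $ i $ j = 0"
  shows "recurrent (\<lambda>x. D *v x) \<longleftrightarrow> (\<forall>i. norm (D $ i $ i) = 1)"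
proof -
  have D_nth: "(D *v x) $ i = D $ i $ i * x $ i" for x i
    using matrix_vector_mult_nth_supported[of "{i}" D i x] off by auto
  show ?thesis
  proof
    assume rec: "recurrent (\<lambda>x. D *v x)"
    show "\<forall>i. norm (D $ i $ i) = 1"
    proof
      fix i
      show "norm (D $ i $ i) = 1"
        using recurrent_eigenfunction_unimodular[OF rec continuous_on_component[OF continuous_on_id],
            of i _ "axis i 1"]
        by (simp add: D_nth)
    qed
  next
    assume unimodular: "\<forall>i. norm (D $ i $ i) = 1"
    show "recurrent (\<lambda>x. D *v x)"
    proof (rule recurrent_linear_isometry)
      show "norm (D *v x) = norm x" for x
        by (simp add: norm_vec_def norm_mult unimodular D_nth)
    qed (rule matrix_vector_mul_linear)
  qed
qed

\<comment> \<open>The index type carries no order; \<open>h\<close> supplies the one in which the Jordan blocks are read.\<close>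
definition jordan_form_wrt :: "('n \<Rightarrow> nat) \<Rightarrow> 'a::{zero,one}^'n^'n \<Rightarrow> bool" where
  "jordan_form_wrt h J \<longleftrightarrow> (\<forall>a b. a \<noteq> b \<longrightarrow>
     J $ a $ b = 0 \<or> (h b = Suc (h a) \<and> J $ a $ b = 1 \<and> J $ b $ b = J $ a $ a))"

lemma recurrent_jordan_form_imp_diagonal:
  fixes J :: "'a::real_normed_field^'n^'n"
  assumes rec: "recurrent (\<lambda>x. J *v x)" and "inj h" and "jordan_form_wrt h J" and "a \<noteq> b"
  shows "J $ a $ b = 0"
proof (rule ccontr)
  have bidiag: "J $ a $ b = 0 \<or> (h b = Suc (h a) \<and> J $ a $ b = 1 \<and> J $ b $ b = J $ a $ a)"
    if "a \<noteq> b" for a b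
    using \<open>jordan_form_wrt h J\<close> that by (simp add: jordan_form_wrt_def)
  define off_diag where "off_diag a \<longleftrightarrow> (\<exists>b. b \<noteq> a \<and> J $ a $ b \<noteq> 0)" for a
  assume "J $ a $ b \<noteq> 0"
  with \<open>a \<noteq> b\<close> have "off_diag a" by (auto simp: off_diag_def)
  moreover have "\<forall>a. off_diag a \<longrightarrow> h a < Suc (Max (range h))"
    by (simp add: le_imp_less_Suc)
  \<comment> \<open>Take the last row (in the order given by \<open>h\<close>) with an off-diagonal entry: the next row
    is then an eigen-row, and the two rows form a Jordan chain.\<close>
  ultimately obtain a\<^sub>0 where "off_diag a\<^sub>0" and last: "\<And>a. off_diag a \<Longrightarrow> h a \<le> h a\<^sub>0"
    using ex_has_greatest_nat[of off_diag a h] by blast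
  then obtain b\<^sub>0 where "b\<^sub>0 \<noteq> a\<^sub>0" "J $ a\<^sub>0 $ b\<^sub>0 \<noteq> 0" by (auto simp: off_diag_def)
  then have b\<^sub>0: "h b\<^sub>0 = Suc (h a\<^sub>0)" "J $ a\<^sub>0 $ b\<^sub>0 = 1" "J $ b\<^sub>0 $ b\<^sub>0 = J $ a\<^sub>0 $ a\<^sub>0"
    using bidiag[of a\<^sub>0 b\<^sub>0] by auto
  have "J $ b\<^sub>0 $ j = 0" if "j \<notin> {b\<^sub>0}" for j
    using last[of b\<^sub>0] that b\<^sub>0(1) by (auto simp: off_diag_def)
  then have eigen: "(J *v x) $ b\<^sub>0 = J $ a\<^sub>0 $ a\<^sub>0 * x $ b\<^sub>0" for x
    using matrix_vector_mult_nth_supported[of "{b\<^sub>0}" J b\<^sub>0 x] b\<^sub>0(3) by simp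
  have "J $ a\<^sub>0 $ j = 0" if "j \<notin> {a\<^sub>0, b\<^sub>0}" for j
    using bidiag[of a\<^sub>0 j] that b\<^sub>0(1) injD[OF \<open>inj h\<close>, of j b\<^sub>0] by auto
  then have chain: "(J *v x) $ a\<^sub>0 = J $ a\<^sub>0 $ a\<^sub>0 * x $ a\<^sub>0 + x $ b\<^sub>0" for x
    using matrix_vector_mult_nth_supported[of "{a\<^sub>0, b\<^sub>0}" J a\<^sub>0 x] b\<^sub>0(2) \<open>b\<^sub>0 \<noteq> a\<^sub>0\<close> by simp
  note coordinate = continuous_on_component[OF continuous_on_id]
  show False
    using not_recurrent_if_jordan_chain[OF coordinate coordinate,
        of "\<lambda>x. J *v x" a\<^sub>0 "J $ a\<^sub>0 $ a\<^sub>0" b\<^sub>0 "axis b\<^sub>0 1"] rec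
    by (simp add: chain eigen axis_def \<open>b\<^sub>0 \<noteq> a\<^sub>0\<close>[symmetric])
qed

lemma jordan_matrix_off_diagonal:
  assumes "i < sum_list (map fst n_as)" "j < sum_list (map fst n_as)" "i \<noteq> j"
  shows "jordan_matrix n_as $$ (i, j) = 0 \<or>
    (j = Suc i \<and> jordan_matrix n_as $$ (i, j) = 1 \<and>
     jordan_matrix n_as $$ (j, j) = jordan_matrix n_as $$ (i, i))"
  using assms
proof (induction n_as arbitrary: i j)
  case (Cons na n_as)
  obtain m a where na: "na = (m, a)" by force
  have dims: "i < m + dim_row (jordan_matrix n_as)" "i < m + dim_col (jordan_matrix n_as)"
    "j < m + dim_row (jordan_matrix n_as)" "j < m + dim_col (jordan_matrix n_as)"
    using Cons.prems by (auto simp: na)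
  consider "i < m" | "j < m" | "m \<le> i" "m \<le> j" by linarith
  then show ?case
  proof cases
    case 3
    then have "j - m = Suc (i - m) \<longleftrightarrow> j = Suc i" by arith
    then show ?thesis
      using 3 Cons.prems dims Cons.IH[of "i - m" "j - m"]
      unfolding na jordan_matrix_Cons by (auto simp: index_mat_four_block)
  qed (use Cons.prems dims in \<open>auto simp: na jordan_matrix_Cons index_mat_four_block\<close>)
qed simp

\<comment> \<open>Jordan_Normal_Form indexes by \<open>{0..<n}\<close>; a bijection \<open>h\<close> from the index type onto
  \<open>{0..<CARD('n)}\<close> translates between its matrices and those of \<open>Finite_Cartesian_Product\<close>.\<close>
definition cart_of_mat :: "('n::finite \<Rightarrow> nat) \<Rightarrow> 'a mat \<Rightarrow> 'a^'n^'n" where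
  "cart_of_mat h M = (\<chi> a b. M $$ (h a, h b))"

definition mat_of_cart :: "('n::finite \<Rightarrow> nat) \<Rightarrow> 'a^'n^'n \<Rightarrow> 'a mat" where
  "mat_of_cart h A = Matrix.mat CARD('n) CARD('n) (\<lambda>(i, j). A $ inv_into UNIV h i $ inv_into UNIV h j)"

context
  fixes h :: "'n::finite \<Rightarrow> nat"
  assumes h: "bij_betw h UNIV {0..<CARD('n)}"
begin

lemma h_less_card: "h a < CARD('n)"
  using bij_betwE[OF h] by auto

lemma cart_of_mat_of_cart: "cart_of_mat h (mat_of_cart h A) = A"
  using bij_betw_imp_inj_on[OF h]
  by (simp add: cart_of_mat_def mat_of_cart_def vec_eq_iff h_less_card)

lemma cart_of_mat_mult:
  fixes M N :: "'a::comm_semiring_1 mat"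
  assumes "M \<in> carrier_mat CARD('n) CARD('n)" "N \<in> carrier_mat CARD('n) CARD('n)"
  shows "cart_of_mat h (M * N) = cart_of_mat h M ** cart_of_mat h N"
proof -
  have "(M * N) $$ (h a, h c) = (\<Sum>b\<in>UNIV. M $$ (h a, h b) * N $$ (h b, h c))" for a c
  proof -
    have "(M * N) $$ (h a, h c) = (\<Sum>k = 0..<CARD('n). M $$ (h a, k) * N $$ (k, h c))"
      using assms h_less_card by (simp add: scalar_prod_def)
    also have "\<dots> = (\<Sum>b\<in>UNIV. M $$ (h a, h b) * N $$ (h b, h c))"
      by (rule sum.reindex_bij_betw[OF h, symmetric])
    finally show ?thesis .
  qed
  then show ?thesis by (simp add: cart_of_mat_def vec_eq_iff matrix_matrix_mult_def)
qed

lemma cart_of_mat_one: "cart_of_mat h (1\<^sub>m CARD('n)) = mat 1"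
  using bij_betw_imp_inj_on[OF h]
  by (auto simp: cart_of_mat_def vec_eq_iff Finite_Cartesian_Product.mat_def h_less_card inj_eq)

end

lemma jordan_form_cart:
  fixes A :: "complex^'n^'n"
  obtains h :: "'n \<Rightarrow> nat" and P J :: "complex^'n^'n"
  where "inj h" "jordan_form_wrt h J" "invertible P" "A = P ** J ** matrix_inv P"
proof -
  obtain h where h: "bij_betw h (UNIV :: 'n set) {0..<CARD('n)}"
    using ex_bij_betw_finite_nat[of "UNIV :: 'n set"] by auto
  let ?n = "CARD('n)" and ?A = "mat_of_cart h A" and ?c = "cart_of_mat h"
  have "?A \<in> carrier_mat ?n ?n" by (simp add: mat_of_cart_def)
  then obtain n_as where "jordan_nf ?A n_as"
    using char_poly_factorized jordan_nf_exists by blast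
  then obtain P Q where "similar_mat_wit ?A (jordan_matrix n_as) P Q"
    unfolding jordan_nf_def similar_mat_def by blast
  then have carrier: "jordan_matrix n_as \<in> carrier_mat ?n ?n" "P \<in> carrier_mat ?n ?n" "Q \<in> carrier_mat ?n ?n"
    and PQ: "P * Q = 1\<^sub>m ?n" and QP: "Q * P = 1\<^sub>m ?n" and A_eq: "?A = P * jordan_matrix n_as * Q"
    unfolding similar_mat_wit_def Let_def by (auto simp: mat_of_cart_def)
  note mult = cart_of_mat_mult[OF h]
  have PQ': "?c P ** ?c Q = mat 1"
    using PQ mult[OF carrier(2,3)] cart_of_mat_one[OF h] by metis
  have QP': "?c Q ** ?c P = mat 1"
    using QP mult[OF carrier(3,2)] cart_of_mat_one[OF h] by metis
  show ?thesis
  proof (rule that)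
    show "inj h" using h bij_betw_imp_inj_on by blast
    show "invertible (?c P)"
      using PQ' QP' by (auto simp: invertible_def)
    have "A = ?c ?A" by (simp add: cart_of_mat_of_cart[OF h])
    also have "\<dots> = ?c (P * jordan_matrix n_as) ** ?c Q"
      unfolding A_eq using carrier by (intro mult) auto
    also have "\<dots> = ?c P ** ?c (jordan_matrix n_as) ** matrix_inv (?c P)"
      using mult[OF carrier(2,1)] matrix_inv_unique[OF PQ' QP'] by simp
    finally show "A = ?c P ** ?c (jordan_matrix n_as) ** matrix_inv (?c P)" .
    have "sum_list (map fst n_as) = ?n"
      using carrier(1) by auto
    then show "jordan_form_wrt h (?c (jordan_matrix n_as))"
      using jordan_matrix_off_diagonal[of "h _" n_as "h _"] h_less_card[OF h] bij_betw_imp_inj_on[OF h]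
      by (simp add: jordan_form_wrt_def cart_of_mat_def inj_eq)
  qed
qed

theorem theorem4p1:
  fixes A :: "complex ^ 'n ^ 'n"
  shows "recurrent (\<lambda>x. A *v x) \<longleftrightarrow>
    (\<exists>P D :: complex ^ 'n ^ 'n. invertible P \<and>
        (\<forall>i j. i \<noteq> j \<longrightarrow> D $ i $ j = 0) \<and>
        (\<forall>i. norm (D $ i $ i) = 1) \<and>
        A = P ** D ** matrix_inv P)"
  (is "_ \<longleftrightarrow> (\<exists>P D. ?diagonalizes P D)")
proof
  assume rec: "recurrent (\<lambda>x. A *v x)"
  obtain h :: "'n \<Rightarrow> nat" and P J :: "complex^'n^'n"
    where "inj h" "jordan_form_wrt h J" "invertible P" and A: "A = P ** J ** matrix_inv P"
    using jordan_form_cart[of A] by blast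
  have rec_J: "recurrent (\<lambda>x. J *v x)"
    using rec recurrent_similar_iff[OF \<open>invertible P\<close>] by (simp add: A)
  have diagonal: "\<And>i j. i \<noteq> j \<Longrightarrow> J $ i $ j = 0"
    using recurrent_jordan_form_imp_diagonal[OF rec_J \<open>inj h\<close> \<open>jordan_form_wrt h J\<close>] .
  then have "\<forall>i. norm (J $ i $ i) = 1"
    using recurrent_diagonal_iff rec_J by blast
  then show "\<exists>P D. ?diagonalizes P D"
    using diagonal \<open>invertible P\<close> A by blast
next
  assume "\<exists>P D. ?diagonalizes P D"
  then obtain P D where "?diagonalizes P D" by blast
  then have "invertible P" "\<forall>i j. i \<noteq> j \<longrightarrow> D $ i $ j = 0" "\<forall>i. norm (D $ i $ i) = 1"
    and A: "A = P ** D ** matrix_inv P"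
    by simp_all
  then show "recurrent (\<lambda>x. A *v x)"
    using recurrent_diagonal_iff[of D] recurrent_similar_iff[of P D] by simp
qed

end
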